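(* A congruence $\sim$ on a finitely generated commutative monoid $Q$ is mesoprimary if and only if the set $F$ of non-nilpotent elements of $\bar Q=Q/\sim$ is a cancellative monoid that acts (by addition) semifreely on $\bar Q\setminus\{\infty\}$ with finitely many orbits (where $\bar Q\setminus\{\infty\}=\bar Q$ if $\bar Q$ has no nil).
   Context: In a commutative monoid $M$: $\infty$ is nil if $m+\infty=\infty$ for all $m$; $m$ is nilpotent if $nm$ is nil for some $n\in\mathbb N$; cancellative if $m+a=m+b\Rightarrow a=b$; partly cancellative if $m+a=m+b\ne$ nil implies $a=b$ for all cancellative $a,b$. A congruence on $Q$ is an equivalence relation $\sim$ with $a\sim b\Rightarrow a+c\sim b+c$; it is \emph{primary} if every element of $\bar Q$ is nilpotent or cancellative, and \emph{mesoprimary} if moreover every element of $\bar Q$ is partly cancellative. An action of a monoid $F$ on a set $T$ is \emph{semifree} if $t\mapsto f\cdot t$ is injective $T\to T$ for every $f\in F$ and $f\mapsto f\cdot t$ is injective $F\to T$ for every $t\in T$. An \emph{orbit} of the action is an equivalence class of the equivalence relation on $T$ generated by $s\sim f\cdot s$ ($s\in T$, $f\in F$). *)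

theory Defs
  imports Main
begin

text \<open>A congruence on Q is a relation R on the whole type; the quotient monoid Q/R has
  the classes R `` {a} as elements and [a] + [b] = [a + b].  All notions about
  elements of the quotient are expressed through representatives a :: 'a.\<close>

inductive_set mon_gen :: "'a::comm_monoid_add set \<Rightarrow> 'a set" for G where
  zero: "0 \<in> mon_gen G"
| gen: "g \<in> G \<Longrightarrow> g \<in> mon_gen G"
| add: "x \<in> mon_gen G \<Longrightarrow> y \<in> mon_gen G \<Longrightarrow> x + y \<in> mon_gen G"

definition fin_gen_monoid :: "'a::comm_monoid_add itself \<Rightarrow> bool" where
  "fin_gen_monoid _ \<longleftrightarrow> (\<exists>G::'a set. finite G \<and> mon_gen G = UNIV)"

definition congruence :: "('a::comm_monoid_add \<times> 'a) set \<Rightarrow> bool" where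
  "congruence R \<longleftrightarrow> equiv UNIV R \<and> (\<forall>a b c. (a, b) \<in> R \<longrightarrow> (a + c, b + c) \<in> R)"

definition nsum :: "nat \<Rightarrow> 'a::comm_monoid_add \<Rightarrow> 'a" where
  "nsum n m = (\<Sum>i<n. m)"

definition qnil :: "('a::comm_monoid_add \<times> 'a) set \<Rightarrow> 'a \<Rightarrow> bool" where
  "qnil R z \<longleftrightarrow> (\<forall>m. (m + z, z) \<in> R)"

definition qnilpotent :: "('a::comm_monoid_add \<times> 'a) set \<Rightarrow> 'a \<Rightarrow> bool" where
  "qnilpotent R m \<longleftrightarrow> (\<exists>n::nat. qnil R (nsum n m))"

definition qcancellative :: "('a::comm_monoid_add \<times> 'a) set \<Rightarrow> 'a \<Rightarrow> bool" where
  "qcancellative R m \<longleftrightarrow> (\<forall>a b. (m + a, m + b) \<in> R \<longrightarrow> (a, b) \<in> R)"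

definition qpartly_cancellative :: "('a::comm_monoid_add \<times> 'a) set \<Rightarrow> 'a \<Rightarrow> bool" where
  "qpartly_cancellative R m \<longleftrightarrow>
     (\<forall>a b. qcancellative R a \<and> qcancellative R b \<and> (m + a, m + b) \<in> R \<and> \<not> qnil R (m + a)
        \<longrightarrow> (a, b) \<in> R)"

definition primary :: "('a::comm_monoid_add \<times> 'a) set \<Rightarrow> bool" where
  "primary R \<longleftrightarrow> congruence R \<and> (\<forall>m. qnilpotent R m \<or> qcancellative R m)"

definition mesoprimary :: "('a::comm_monoid_add \<times> 'a) set \<Rightarrow> bool" where
  "mesoprimary R \<longleftrightarrow> primary R \<and> (\<forall>m. qpartly_cancellative R m)"

text \<open>Representatives of F (non-nilpotent classes) and of Q/R minus the nil.\<close>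
definition Fset :: "('a::comm_monoid_add \<times> 'a) set \<Rightarrow> 'a set" where
  "Fset R = {a. \<not> qnilpotent R a}"

definition Tset :: "('a::comm_monoid_add \<times> 'a) set \<Rightarrow> 'a set" where
  "Tset R = {b. \<not> qnil R b}"

definition F_cancellative_monoid :: "('a::comm_monoid_add \<times> 'a) set \<Rightarrow> bool" where
  "F_cancellative_monoid R \<longleftrightarrow>
     0 \<in> Fset R \<and> (\<forall>a\<in>Fset R. \<forall>b\<in>Fset R. a + b \<in> Fset R) \<and>
     (\<forall>a\<in>Fset R. \<forall>b\<in>Fset R. \<forall>c\<in>Fset R. (a + b, a + c) \<in> R \<longrightarrow> (b, c) \<in> R)"

definition F_acts_semifreely :: "('a::comm_monoid_add \<times> 'a) set \<Rightarrow> bool" where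
  "F_acts_semifreely R \<longleftrightarrow>
     (\<forall>a\<in>Fset R. \<forall>b\<in>Tset R. a + b \<in> Tset R) \<and>
     (\<forall>a\<in>Fset R. \<forall>b\<in>Tset R. \<forall>c\<in>Tset R. (a + b, a + c) \<in> R \<longrightarrow> (b, c) \<in> R) \<and>
     (\<forall>b\<in>Tset R. \<forall>a\<in>Fset R. \<forall>a'\<in>Fset R. (a + b, a' + b) \<in> R \<longrightarrow> (a, a') \<in> R)"

definition orbit_step :: "('a::comm_monoid_add \<times> 'a) set \<Rightarrow> ('a \<times> 'a) set" where
  "orbit_step R = {(s, t). s \<in> Tset R \<and> t \<in> Tset R \<and>
                      ((s, t) \<in> R \<or> (\<exists>a\<in>Fset R. (a + s, t) \<in> R))}"

definition orbits :: "('a::comm_monoid_add \<times> 'a) set \<Rightarrow> 'a set set" where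
  "orbits R = Tset R // ((orbit_step R \<union> (orbit_step R)\<inverse>)\<^sup>*)"

end

theory Submission
  imports Defs
begin

(* Proof idea.  Throughout, R is a congruence on Q with a nontrivial quotient Q/R,
   which is the same as saying that 0 is not nil in Q/R.

   If R is primary, every non-nilpotent class is cancellative,
   so F consists exactly of the cancellative classes; these form a cancellative
   submonoid, and adding a cancellative class never produces the nil from a
   non-nil class, so F acts on T = Q/R minus nil.  The action is injective in the
   T-argument by cancellativity and in the F-argument by partial cancellativity.
   Finitely many orbits: by induction over a finite generating set, every element
   of Q is nil or an F-translate of one of finitely many elements (a nilpotent
   generator contributes only finitely many powers); their orbits exhaust T.

   Semifreeness alone forces every element of F to be
   cancellative (nil classes are handled separately), giving primality, and
   injectivity in the F-argument is exactly partial cancellativity. *)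

section \<open>Congruences and nil classes\<close>

context
  fixes R :: "('a::comm_monoid_add \<times> 'a) set"
  assumes cong: "congruence R"
begin

lemma cong_refl: "(a, a) \<in> R"
  using cong unfolding congruence_def equiv_def refl_on_def by blast

lemma cong_sym: "(a, b) \<in> R \<Longrightarrow> (b, a) \<in> R"
  using cong unfolding congruence_def equiv_def sym_def by blast

lemma cong_trans: "(a, b) \<in> R \<Longrightarrow> (b, c) \<in> R \<Longrightarrow> (a, c) \<in> R"
  using cong unfolding congruence_def equiv_def trans_def by blast

lemma cong_add_left: "(a, b) \<in> R \<Longrightarrow> (c + a, c + b) \<in> R"
  using cong unfolding congruence_def by (metis add.commute)

lemma nil_add: assumes "qnil R a" shows "qnil R (c + a)"
  unfolding qnil_def
proof
  fix m
  have "(m + c + a, a) \<in> R" "(c + a, a) \<in> R" using assms unfolding qnil_def by auto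
  then show "(m + (c + a), c + a) \<in> R" using cong_sym cong_trans by (metis add.assoc)
qed

lemma nil_cong: assumes "qnil R a" and "(a, b) \<in> R" shows "qnil R b"
  unfolding qnil_def
proof
  fix m
  have "(m + b, m + a) \<in> R" using cong_add_left cong_sym assms(2) by blast
  moreover have "(m + a, a) \<in> R" using assms(1) unfolding qnil_def by auto
  ultimately show "(m + b, b) \<in> R" using assms(2) cong_trans by metis
qed

lemma nil_unique: assumes "qnil R a" "qnil R b" shows "(a, b) \<in> R"
proof -
  have "(b + a, a) \<in> R" "(a + b, b) \<in> R" using assms unfolding qnil_def by auto
  then show ?thesis using cong_sym cong_trans by (metis add.commute)
qed

lemma nontrivial_iff_zero_not_nil: "(\<exists>a b. (a, b) \<notin> R) \<longleftrightarrow> \<not> qnil R 0"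
proof
  assume "\<exists>a b. (a, b) \<notin> R"
  then obtain a b where ab: "(a, b) \<notin> R" by blast
  show "\<not> qnil R 0"
  proof
    assume "qnil R 0"
    then have "(a, 0) \<in> R" "(b, 0) \<in> R" unfolding qnil_def by (metis add_0_right)+
    then show False using ab cong_sym cong_trans by metis
  qed
next
  assume "\<not> qnil R 0"
  then show "\<exists>a b. (a, b) \<notin> R" unfolding qnil_def by auto
qed

end

lemma nsum_0 [simp]: "nsum 0 m = 0"
  by (simp add: nsum_def)

lemma nsum_Suc: "nsum (Suc n) m = m + nsum n m"
  by (simp add: nsum_def add.commute)

lemma nsum_add: "nsum (i + j) m = nsum i m + nsum j m"
  by (induct i) (simp_all add: nsum_Suc add.assoc)

lemma cancellative_0: "qcancellative R 0"
  unfolding qcancellative_def by simp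

lemma cancellative_add: "qcancellative R a \<Longrightarrow> qcancellative R b \<Longrightarrow> qcancellative R (a + b)"
  unfolding qcancellative_def by (metis add.assoc)

lemma cancellative_nsum: "qcancellative R m \<Longrightarrow> qcancellative R (nsum n m)"
  by (induct n) (simp_all add: cancellative_0 nsum_Suc cancellative_add)

text \<open>In a nontrivial quotient a cancellative class is never nilpotent, since a
  cancellative nil would identify all classes.\<close>
lemma cancellative_not_nilpotent:
  assumes cong: "congruence R" and nontriv: "\<not> qnil R 0" and canc: "qcancellative R m"
  shows "\<not> qnilpotent R m"
proof
  assume "qnilpotent R m"
  then obtain n where nil: "qnil R (nsum n m)" unfolding qnilpotent_def by blast
  have "(nsum n m + a, nsum n m + 0) \<in> R" for a
    using nil cong_sym[OF cong] unfolding qnil_def by (simp add: add.commute)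
  then have "(a, 0) \<in> R" for a
    using cancellative_nsum[OF canc] unfolding qcancellative_def by blast
  then have "qnil R 0"
    unfolding qnil_def by simp
  with nontriv show False by contradiction
qed

lemma cancellative_in_Fset:
  "congruence R \<Longrightarrow> \<not> qnil R 0 \<Longrightarrow> qcancellative R m \<Longrightarrow> m \<in> Fset R"
  using cancellative_not_nilpotent unfolding Fset_def by blast

section \<open>Primary congruences: F is the monoid of cancellative classes\<close>

context
  fixes R :: "('a::comm_monoid_add \<times> 'a) set"
  assumes cong: "congruence R"
    and nontriv: "\<not> qnil R 0"
    and prim: "\<forall>m. qnilpotent R m \<or> qcancellative R m"
begin

lemma Fset_iff_cancellative: "m \<in> Fset R \<longleftrightarrow> qcancellative R m"
  using prim cancellative_in_Fset[OF cong nontriv] unfolding Fset_def by blast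

lemma Fset_add: "a \<in> Fset R \<Longrightarrow> b \<in> Fset R \<Longrightarrow> a + b \<in> Fset R"
  using Fset_iff_cancellative cancellative_add by blast

lemma primary_F_cancellative_monoid: "F_cancellative_monoid R"
  unfolding F_cancellative_monoid_def
  using Fset_iff_cancellative cancellative_0 Fset_add unfolding qcancellative_def by blast

lemma Fset_acts_on_Tset:
  assumes a: "a \<in> Fset R" and b: "b \<in> Tset R" shows "a + b \<in> Tset R"
proof -
  have "qnil R b" if nil: "qnil R (a + b)"
    unfolding qnil_def
  proof
    fix m
    have "(a + (m + b), a + b) \<in> R" using nil unfolding qnil_def by (metis add.left_commute)
    then show "(m + b, b) \<in> R" using a Fset_iff_cancellative unfolding qcancellative_def by blast
  qed
  then show ?thesis using b unfolding Tset_def by blast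
qed

lemma mesoprimary_acts_semifreely:
  assumes pc: "\<forall>m. qpartly_cancellative R m"
  shows "F_acts_semifreely R"
  unfolding F_acts_semifreely_def
proof (intro conjI ballI impI)
  fix a b assume "a \<in> Fset R" "b \<in> Tset R"
  then show "a + b \<in> Tset R" by (rule Fset_acts_on_Tset)
next
  fix a b d assume "a \<in> Fset R" "(a + b, a + d) \<in> R"
  then show "(b, d) \<in> R" using Fset_iff_cancellative unfolding qcancellative_def by blast
next
  fix b a a' assume b: "b \<in> Tset R" and a: "a \<in> Fset R" "a' \<in> Fset R"
    and eq: "(a + b, a' + b) \<in> R"
  have "\<not> qnil R (b + a)"
    using Fset_acts_on_Tset[OF a(1) b] unfolding Tset_def by (simp add: add.commute)
  then show "(a, a') \<in> R"
    using pc a eq Fset_iff_cancellative unfolding qpartly_cancellative_def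
    by (metis add.commute)
qed

end

section \<open>Finitely many orbits\<close>

definition covered_by :: "('a::comm_monoid_add \<times> 'a) set \<Rightarrow> 'a set \<Rightarrow> 'a set \<Rightarrow> bool" where
  "covered_by R P X \<longleftrightarrow> (\<forall>x\<in>X. qnil R x \<or> (\<exists>p\<in>P. \<exists>f\<in>Fset R. (f + p, x) \<in> R))"

lemma mon_gen_insert:
  "x \<in> mon_gen (insert g H) \<Longrightarrow> \<exists>j y. y \<in> mon_gen H \<and> x = nsum j g + y"
proof (induct rule: mon_gen.induct)
  case zero
  show ?case using mon_gen.zero by (metis add_0 nsum_0)
next
  case (gen x)
  then consider "x = g" | "x \<in> H" by blast
  then show ?case
  proof cases
    case 1 then show ?thesis using mon_gen.zero nsum_Suc[of 0 g] by (metis add_0_right nsum_0)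
  next
    case 2 then show ?thesis using mon_gen.gen by (metis add_0 nsum_0)
  qed
next
  case (add x y)
  then obtain j1 y1 j2 y2 where "y1 \<in> mon_gen H" "x = nsum j1 g + y1"
    and "y2 \<in> mon_gen H" "y = nsum j2 g + y2"
    by blast
  then show ?case using mon_gen.add nsum_add[of j1 j2 g]
    by (metis (no_types, lifting) add.assoc add.left_commute)
qed

context
  fixes R :: "('a::comm_monoid_add \<times> 'a) set"
  assumes cong: "congruence R"
    and nontriv: "\<not> qnil R 0"
    and prim: "\<forall>m. qnilpotent R m \<or> qcancellative R m"
begin

text \<open>A cancellative generator is absorbed into F: the same cover still works.\<close>
lemma covered_insert_cancellative:
  assumes cov: "covered_by R P (mon_gen H)" and g: "qcancellative R g"
  shows "covered_by R P (mon_gen (insert g H))"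
  unfolding covered_by_def
proof
  fix x assume "x \<in> mon_gen (insert g H)"
  then obtain j y where y: "y \<in> mon_gen H" and x: "x = nsum j g + y"
    using mon_gen_insert by blast
  from cov y consider "qnil R y" | p f where "p \<in> P" "f \<in> Fset R" "(f + p, y) \<in> R"
    unfolding covered_by_def by blast
  then show "qnil R x \<or> (\<exists>p\<in>P. \<exists>f\<in>Fset R. (f + p, x) \<in> R)"
  proof cases
    case 1 then show ?thesis using nil_add[OF cong] x by blast
  next
    case 2
    have "nsum j g + f \<in> Fset R"
      using Fset_add[OF cong nontriv prim] 2(2) g cancellative_nsum
        Fset_iff_cancellative[OF cong nontriv prim] by blast
    moreover have "(nsum j g + f + p, x) \<in> R"
      using cong_add_left[OF cong 2(3)] x by (simp add: add.assoc)
    ultimately show ?thesis using 2(1) by blast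
  qed
qed

lemma covered_insert_nilpotent:
  assumes cov: "covered_by R P (mon_gen H)" and k: "qnil R (nsum k g)"
  shows "covered_by R ((\<lambda>(i, p). nsum i g + p) ` ({..<k} \<times> P)) (mon_gen (insert g H))"
  unfolding covered_by_def
proof
  fix x assume "x \<in> mon_gen (insert g H)"
  then obtain j y where y: "y \<in> mon_gen H" and x: "x = nsum j g + y"
    using mon_gen_insert by blast
  show "qnil R x \<or> (\<exists>p\<in>(\<lambda>(i, p). nsum i g + p) ` ({..<k} \<times> P). \<exists>f\<in>Fset R. (f + p, x) \<in> R)"
  proof (cases "j < k")
    case False
    then have "nsum j g = nsum (j - k) g + nsum k g" using nsum_add[of "j - k" k g] by simp
    then have "qnil R (nsum j g)" using nil_add[OF cong k] by simp
    then have "qnil R (y + nsum j g)" using nil_add[OF cong] by blast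
    then show ?thesis using x by (simp add: add.commute)
  next
    case jk: True
    from cov y consider "qnil R y" | p f where "p \<in> P" "f \<in> Fset R" "(f + p, y) \<in> R"
      unfolding covered_by_def by blast
    then show ?thesis
    proof cases
      case 1 then show ?thesis using nil_add[OF cong] x by blast
    next
      case 2
      have "nsum j g + p \<in> (\<lambda>(i, p). nsum i g + p) ` ({..<k} \<times> P)" using jk 2(1) by force
      moreover have "(f + (nsum j g + p), x) \<in> R"
        using cong_add_left[OF cong 2(3), of "nsum j g"] x by (metis add.left_commute)
      ultimately show ?thesis using 2(2) by blast
    qed
  qed
qed

lemma finite_cover:
  assumes "finite H" shows "\<exists>P. finite P \<and> covered_by R P (mon_gen H)"
  using assms
proof (induct rule: finite_induct)
  case empty
  have "x = 0" if "x \<in> mon_gen {}" for x :: 'a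
    using that by (induct rule: mon_gen.induct) auto
  moreover have "0 \<in> Fset R" using Fset_iff_cancellative[OF cong nontriv prim] cancellative_0 by blast
  ultimately have "covered_by R {0} (mon_gen {})"
    unfolding covered_by_def using cong_refl[OF cong] by fastforce
  then show ?case by blast
next
  case (insert g H)
  then obtain P where P: "finite P" "covered_by R P (mon_gen H)" by blast
  show ?case
  proof (cases "qcancellative R g")
    case True
    then show ?thesis using P covered_insert_cancellative by blast
  next
    case False
    then obtain k where k: "qnil R (nsum k g)" using prim unfolding qnilpotent_def by blast
    have "finite ((\<lambda>(i, p). nsum i g + p) ` ({..<k} \<times> P))" using P(1) by simp
    then show ?thesis using covered_insert_nilpotent[OF P(2) k] by blast
  qed
qed

end

text \<open>A finite cover of Q yields finitely many orbits: every orbit is the orbit of a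
  (necessarily non-nil) element of the cover.\<close>
lemma finite_orbits_if_covered:
  assumes cong: "congruence R" and fin: "finite P" and cov: "covered_by R P UNIV"
  shows "finite (orbits R)"
proof -
  define E where "E = (orbit_step R \<union> (orbit_step R)\<inverse>)\<^sup>*"
  have "orbits R \<subseteq> (\<lambda>p. E `` {p}) ` P"
  proof
    fix Orb assume "Orb \<in> orbits R"
    then obtain x where x: "x \<in> Tset R" "Orb = E `` {x}"
      unfolding orbits_def E_def quotient_def by blast
    then obtain p f where pf: "p \<in> P" "f \<in> Fset R" "(f + p, x) \<in> R"
      using cov unfolding covered_by_def Tset_def by blast
    have "\<not> qnil R p"
      using x(1) nil_add[OF cong, of p f] nil_cong[OF cong _ pf(3)] unfolding Tset_def by blast
    then have "(p, x) \<in> orbit_step R" using x pf unfolding orbit_step_def Tset_def by blast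
    then have "(x, p) \<in> E" unfolding E_def by blast
    moreover have "equiv UNIV E"
      unfolding E_def by (intro equivI refl_rtrancl sym_rtrancl sym_Un_converse trans_rtrancl) auto
    ultimately have "E `` {x} = E `` {p}" by (rule equiv_class_eq[rotated])
    then show "Orb \<in> (\<lambda>p. E `` {p}) ` P" using x pf by blast
  qed
  then show ?thesis using fin finite_subset by blast
qed

section \<open>From a semifree action back to mesoprimality\<close>

context
  fixes R :: "('a::comm_monoid_add \<times> 'a) set"
  assumes cong: "congruence R"
    and semifree: "F_acts_semifreely R"
begin

text \<open>Semifreeness makes every element of F cancellative: on non-nil classes this
  is injectivity in the T-argument, and nil classes are preserved both ways.\<close>
lemma semifree_Fset_cancellative:
  assumes m: "m \<in> Fset R" shows "qcancellative R m"
  unfolding qcancellative_def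
proof (intro allI impI)
  fix a b assume ab: "(m + a, m + b) \<in> R"
  have act: "c \<in> Tset R \<Longrightarrow> m + c \<in> Tset R" for c
    using semifree m unfolding F_acts_semifreely_def by blast
  have nil_iff: "qnil R a \<longleftrightarrow> qnil R b"
    using act nil_add[OF cong] nil_cong[OF cong] ab cong_sym[OF cong]
    unfolding Tset_def by blast
  show "(a, b) \<in> R"
  proof (cases "qnil R a")
    case True
    then show ?thesis using nil_iff nil_unique[OF cong] by blast
  next
    case False
    then show ?thesis
      using nil_iff semifree m ab unfolding F_acts_semifreely_def Tset_def by blast
  qed
qed

lemma semifree_primary: "\<forall>m. qnilpotent R m \<or> qcancellative R m"
  using semifree_Fset_cancellative unfolding Fset_def by blast

lemma semifree_partly_cancellative:
  assumes nontriv: "\<not> qnil R 0" shows "qpartly_cancellative R m"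
  unfolding qpartly_cancellative_def
proof (intro allI impI)
  fix a b
  assume h: "qcancellative R a \<and> qcancellative R b \<and> (m + a, m + b) \<in> R \<and> \<not> qnil R (m + a)"
  have "m \<in> Tset R"
    using h nil_add[OF cong, of m a] unfolding Tset_def by (auto simp: add.commute)
  moreover have "a \<in> Fset R" "b \<in> Fset R"
    using h cancellative_in_Fset[OF cong nontriv] by blast+
  moreover have "(a + m, b + m) \<in> R" using h by (simp add: add.commute)
  ultimately show "(a, b) \<in> R" using semifree unfolding F_acts_semifreely_def by blast
qed

end

theorem corollary6p6:
  fixes R :: "('a::comm_monoid_add \<times> 'a) set"
  assumes "fin_gen_monoid TYPE('a)"
    and "congruence R"
    and "\<exists>a b. (a, b) \<notin> R"
  shows "mesoprimary R \<longleftrightarrow>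
           F_cancellative_monoid R \<and> F_acts_semifreely R \<and> finite (orbits R)"
proof -
  note cong = assms(2)
  have nontriv: "\<not> qnil R 0" using assms(3) nontrivial_iff_zero_not_nil[OF cong] by blast
  show ?thesis
  proof
    assume "mesoprimary R"
    then have prim: "\<forall>m. qnilpotent R m \<or> qcancellative R m"
      and pc: "\<forall>m. qpartly_cancellative R m"
      unfolding mesoprimary_def primary_def by auto
    obtain G :: "'a set" where G: "finite G" "mon_gen G = UNIV"
      using assms(1) unfolding fin_gen_monoid_def by blast
    then obtain P where "finite P" "covered_by R P UNIV"
      using finite_cover[OF cong nontriv prim] by metis
    then show "F_cancellative_monoid R \<and> F_acts_semifreely R \<and> finite (orbits R)"
      using primary_F_cancellative_monoid[OF cong nontriv prim]
        mesoprimary_acts_semifreely[OF cong nontriv prim pc]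
        finite_orbits_if_covered[OF cong] by blast
  next
    assume "F_cancellative_monoid R \<and> F_acts_semifreely R \<and> finite (orbits R)"
    then have semifree: "F_acts_semifreely R" by blast
    show "mesoprimary R"
      unfolding mesoprimary_def primary_def
      using cong semifree_primary[OF cong semifree]
        semifree_partly_cancellative[OF cong semifree nontriv] by blast
  qed
qed

end
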